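(* Let $\varepsilon$ be a random variable with distribution $p$ on a measurable space $\mathcal{E}$, let $f:\mathcal{E}\times\mathbb{R}^d\to\mathbb{R}$, and let $F(\theta)=\mathbb{E}_{\varepsilon\sim p}[f(\varepsilon,\theta)]$ with minimizer $\theta^*$; assume all expectations below are finite and gradient and expectation may be interchanged. Let $c:\mathcal{E}\times\mathbb{R}^d\to\mathbb{R}^d$ be a control variate with $\mathbb{E}_{\varepsilon}[c(\varepsilon,\theta)]=0$ for every $\theta$. Assume, for constants $L,H,M>0$: (A1) for every $\varepsilon$, $\theta\mapsto f(\varepsilon,\theta)$ is differentiable and $L$-smooth: $\|\nabla_\theta f(\varepsilon,\theta)-\nabla_\theta f(\varepsilon,\theta')\|_2\le L\|\theta-\theta'\|_2$; (A2) for every $\varepsilon$, $\theta\mapsto f(\varepsilon,\theta)$ is $H$-strongly convex; (A3) for every $\theta$, $\mathbb{E}_{\varepsilon}\big[\|\nabla_\theta f(\varepsilon,\theta^* )-c(\varepsilon,\theta)\|_2^2\big]\le M\,\mathbb{E}_{\varepsilon}\big[f(\varepsilon,\theta)-f(\varepsilon,\theta^* )\big]$. Fix $\theta_0\in\mathbb{R}^d$, let $\varepsilon_0,\varepsilon_1,\dots$ be i.i.d. with law $p$, and define for $t\ge1$ $$\theta_t=\theta_{t-1}-\eta\big(\nabla_\theta f(\varepsilon_{t-1},\theta_{t-1})-c(\varepsilon_{t-1},\theta_{t-1})\big).$$ If $0<\eta\le \frac{1}{2L+M}$ and $\rho=1-\eta H\big(1-\eta(2L+M)\big)$, then for all $t\ge0$,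 $$\mathbb{E}\big[\|\theta_t-\theta^*\|_2^2\big]\le \rho^{\,t}\,\|\theta_0-\theta^*\|_2^2 .$$
   Context: $\nabla_\theta$ is the gradient in the parameter $\theta$. The update is a stochastic (reparameterization-type) gradient step in which the stochastic gradient is corrected by a zero-mean control variate $c$. *)

theory Defs
  imports "HOL-Probability.Probability"
begin

definition strongly_convex_on :: "'a::real_inner set \<Rightarrow> real \<Rightarrow> ('a \<Rightarrow> real) \<Rightarrow> bool" where
  "strongly_convex_on S H g \<longleftrightarrow> convex_on S (\<lambda>x. g x - (H / 2) * (norm x)\<^sup>2)"

primrec sgd_cv_iter ::
  "('e \<Rightarrow> 'a \<Rightarrow> 'a::real_vector) \<Rightarrow> ('e \<Rightarrow> 'a \<Rightarrow> 'a) \<Rightarrow> real \<Rightarrow> 'a \<Rightarrow> (nat \<Rightarrow> 'w \<Rightarrow> 'e)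
    \<Rightarrow> nat \<Rightarrow> 'w \<Rightarrow> 'a" where
  "sgd_cv_iter gf c \<eta> \<theta>0 eps 0 \<omega> = \<theta>0"
| "sgd_cv_iter gf c \<eta> \<theta>0 eps (Suc t) \<omega> =
     (let \<theta> = sgd_cv_iter gf c \<eta> \<theta>0 eps t \<omega>
      in \<theta> - \<eta> *\<^sub>R (gf (eps t \<omega>) \<theta> - c (eps t \<omega>) \<theta>))"

end

theory Submission
  imports Defs
begin

text \<open>
  For a single sample, strong convexity and co-coercivity of the L-smooth gradient bound the
  squared distance after one corrected step by the old distance, minus the expected progress
  along the gradient, plus a variance term. Taking the expectation over the fresh sample, the
  control variate and the gradient at the minimizer disappear from the linear term, (A3)
  controls the variance, and the step size condition makes the suboptimality terms cancel;
  what remains is the contraction factor 1 - \<eta> H, which is at most \<rho>. Since the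
  sample drawn at step t is independent of the current iterate, this one-step bound can be
  applied inside the expectation, and induction on t concludes.
\<close>

lemma line_restriction_has_real_derivative:
  fixes g :: "'a::real_inner \<Rightarrow> real"
  assumes deriv: "\<And>x. (g has_derivative (\<lambda>h. gg x \<bullet> h)) (at x)"
  shows "((\<lambda>s. g (x + s *\<^sub>R d)) has_real_derivative (gg (x + s *\<^sub>R d) \<bullet> d)) (at s)"
proof -
  have "((\<lambda>s. x + s *\<^sub>R d) has_derivative (\<lambda>h. h *\<^sub>R d)) (at s)"
    by (auto intro!: derivative_eq_intros)
  from has_derivative_compose[OF this deriv]
  have "((\<lambda>s. g (x + s *\<^sub>R d)) has_derivative (\<lambda>h. gg (x + s *\<^sub>R d) \<bullet> (h *\<^sub>R d))) (at s)" .
  moreover have "(\<lambda>h. gg (x + s *\<^sub>R d) \<bullet> (h *\<^sub>R d)) = (*) (gg (x + s *\<^sub>R d) \<bullet> d)"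
    by (auto simp: fun_eq_iff)
  ultimately show ?thesis by (simp add: has_field_derivative_def)
qed

lemma lipschitz_gradient_upper_bound:
  fixes g :: "'a::real_inner \<Rightarrow> real"
  assumes deriv: "\<And>x. (g has_derivative (\<lambda>h. gg x \<bullet> h)) (at x)"
    and lip: "\<And>x y. norm (gg x - gg y) \<le> L * norm (x - y)"
  shows "g y \<le> g x + gg x \<bullet> (y - x) + L / 2 * (norm (y - x))\<^sup>2"
proof -
  define d where "d = y - x"
  define \<psi> where "\<psi> s = g (x + s *\<^sub>R d) - s * (gg x \<bullet> d) - L / 2 * s\<^sup>2 * (norm d)\<^sup>2" for s
  have "\<psi> 1 \<le> \<psi> 0"
  proof (rule DERIV_nonpos_imp_nonincreasing[of 0 1])
    fix s :: real assume s: "0 \<le> s" "s \<le> 1"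
    have D: "(\<psi> has_real_derivative (gg (x + s *\<^sub>R d) \<bullet> d - gg x \<bullet> d - L * s * (norm d)\<^sup>2)) (at s)"
      unfolding \<psi>_def
      by (rule derivative_eq_intros line_restriction_has_real_derivative[OF deriv] refl | simp)+
    have "gg (x + s *\<^sub>R d) \<bullet> d - gg x \<bullet> d = (gg (x + s *\<^sub>R d) - gg x) \<bullet> d"
      by (simp add: inner_diff_left)
    also have "\<dots> \<le> norm (gg (x + s *\<^sub>R d) - gg x) * norm d"
      by (rule Cauchy_Schwarz_ineq2[THEN order_trans[OF abs_ge_self]])
    also have "\<dots> \<le> (L * norm (s *\<^sub>R d)) * norm d"
      using lip[of "x + s *\<^sub>R d" x] by (intro mult_right_mono) auto
    also have "\<dots> = L * s * (norm d)\<^sup>2" using s by (simp add: power2_eq_square)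
    finally show "\<exists>y. (\<psi> has_real_derivative y) (at s) \<and> y \<le> 0"
      using D by auto
  qed simp
  then show ?thesis by (simp add: \<psi>_def d_def algebra_simps)
qed

lemma strongly_convex_on_gradient_inequality:
  fixes g :: "'a::real_inner \<Rightarrow> real"
  assumes deriv: "\<And>x. (g has_derivative (\<lambda>h. gg x \<bullet> h)) (at x)"
    and sc: "strongly_convex_on UNIV H g"
  shows "g x + gg x \<bullet> (z - x) + H / 2 * (norm (z - x))\<^sup>2 \<le> g z"
proof -
  define d where "d = z - x"
  define \<phi> where "\<phi> s = g (x + s *\<^sub>R d) - H / 2 * (norm (x + s *\<^sub>R d))\<^sup>2" for s
  have "convex_on UNIV \<phi>"
  proof (rule convex_onI)
    fix t s1 s2 :: real assume t: "0 < t" "t < 1"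
    have "x + ((1 - t) * s1 + t * s2) *\<^sub>R d = (1 - t) *\<^sub>R (x + s1 *\<^sub>R d) + t *\<^sub>R (x + s2 *\<^sub>R d)"
      by (simp add: algebra_simps)
    then show "\<phi> ((1 - t) *\<^sub>R s1 + t *\<^sub>R s2) \<le> (1 - t) * \<phi> s1 + t * \<phi> s2"
      using convex_onD[OF sc[unfolded strongly_convex_on_def], of t "x + s1 *\<^sub>R d" "x + s2 *\<^sub>R d"] t
      unfolding \<phi>_def by simp
  qed simp
  have \<phi>_eq: "\<phi> s = g (x + s *\<^sub>R d) - H / 2 * ((norm x)\<^sup>2 + 2 * s * (x \<bullet> d) + s\<^sup>2 * (norm d)\<^sup>2)" for s
  proof -
    have "(norm (x + s *\<^sub>R d))\<^sup>2 = x \<bullet> x + 2 * s * (x \<bullet> d) + s * s * (d \<bullet> d)"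
      by (simp add: power2_norm_eq_inner inner_add_left inner_add_right inner_commute algebra_simps)
    then show ?thesis by (simp add: \<phi>_def dot_square_norm power2_eq_square)
  qed
  have "(\<phi> has_real_derivative (gg (x + 0 *\<^sub>R d) \<bullet> d - H / 2 * (2 * (x \<bullet> d) + 2 * 0 * (norm d)\<^sup>2))) (at 0)"
    unfolding \<phi>_eq[abs_def]
    by (rule derivative_eq_intros line_restriction_has_real_derivative[OF deriv] refl | simp)+
  then have "(gg x \<bullet> d - H * (x \<bullet> d)) * (1 - 0) \<le> \<phi> 1 - \<phi> 0"
    by (intro convex_on_imp_above_tangent[OF \<open>convex_on UNIV \<phi>\<close>]) auto
  then show ?thesis
    by (simp add: \<phi>_eq d_def power2_norm_eq_inner inner_diff_left inner_diff_right algebra_simps)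
qed

lemma gradient_cocoercive:
  fixes g :: "'a::real_inner \<Rightarrow> real"
  assumes deriv: "\<And>x. (g has_derivative (\<lambda>h. gg x \<bullet> h)) (at x)"
    and lip: "\<And>x y. norm (gg x - gg y) \<le> L * norm (x - y)"
    and convex: "\<And>x z. g x + gg x \<bullet> (z - x) \<le> g z"
    and L: "L > 0"
  shows "(norm (gg x - gg y))\<^sup>2 \<le> 2 * L * (g x - g y - gg y \<bullet> (x - y))"
proof -
  define v where "v = gg x - gg y"
  \<comment> \<open>a gradient step from x along the gradient difference (the Baillon-Haddad trick)\<close>
  define w where "w = x - (1 / L) *\<^sub>R v"
  have "g y + gg y \<bullet> (w - y) \<le> g w" by (rule convex)
  also have "g w \<le> g x + gg x \<bullet> (w - x) + L / 2 * (norm (w - x))\<^sup>2"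
    by (rule lipschitz_gradient_upper_bound[OF deriv lip])
  finally have "g y + gg y \<bullet> (w - y) \<le> g x + gg x \<bullet> (w - x) + L / 2 * (norm (w - x))\<^sup>2" .
  moreover have "gg x \<bullet> (w - x) - gg y \<bullet> (w - y) = - (1 / L) * (norm v)\<^sup>2 - gg y \<bullet> (x - y)"
    by (simp add: w_def v_def inner_diff_left inner_diff_right power2_norm_eq_inner algebra_simps)
  moreover have "L / 2 * (norm (w - x))\<^sup>2 = (norm v)\<^sup>2 / (2 * L)"
    using L by (simp add: w_def power_divide field_simps power2_eq_square)
  moreover have "(1 / L) * (norm v)\<^sup>2 = 2 * ((norm v)\<^sup>2 / (2 * L))"
    using L by simp
  ultimately have "(norm v)\<^sup>2 / (2 * L) \<le> g x - g y - gg y \<bullet> (x - y)" by linarith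
  then show ?thesis using L by (simp add: v_def pos_divide_le_eq mult.commute)
qed

lemma norm_add_sq_le: "(norm (a + b :: 'a::real_normed_vector))\<^sup>2 \<le> 2 * (norm a)\<^sup>2 + 2 * (norm b)\<^sup>2"
proof -
  have "(norm (a + b))\<^sup>2 \<le> (norm a + norm b)\<^sup>2"
    by (simp add: norm_triangle_ineq power_mono)
  also have "\<dots> \<le> 2 * (norm a)\<^sup>2 + 2 * (norm b)\<^sup>2"
    using zero_le_power2[of "norm a - norm b"] by (simp only: power2_diff power2_sum)
  finally show ?thesis .
qed

lemma norm_diff_scaleR_sq:
  fixes r v :: "'a::real_inner"
  shows "(norm (r - t *\<^sub>R v))\<^sup>2 = (norm r)\<^sup>2 - 2 * t * (v \<bullet> r) + t\<^sup>2 * (norm v)\<^sup>2"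
proof -
  have "(norm (r - t *\<^sub>R v))\<^sup>2 = r \<bullet> r - 2 * t * (v \<bullet> r) + t * t * (v \<bullet> v)"
    by (simp add: power2_norm_eq_inner inner_diff_left inner_diff_right inner_commute algebra_simps)
  then show ?thesis by (simp add: dot_square_norm power2_eq_square)
qed

text \<open>
  The quadratic term is split at the gradient in z: co-coercivity handles one half, leaving only
  the deviation of v from the gradient in z.
\<close>
lemma norm_sq_corrected_gradient_step_le:
  fixes g :: "'a::real_inner \<Rightarrow> real"
  assumes deriv: "\<And>x. (g has_derivative (\<lambda>h. gg x \<bullet> h)) (at x)"
    and lip: "\<And>x y. norm (gg x - gg y) \<le> L * norm (x - y)"
    and convex: "\<And>x z. g x + gg x \<bullet> (z - x) \<le> g z"
    and L: "L > 0"
  shows "(norm (x - \<eta> *\<^sub>R (gg x - v) - z))\<^sup>2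
    \<le> (norm (x - z))\<^sup>2 - 2 * \<eta> * ((gg x - v) \<bullet> (x - z))
      + \<eta>\<^sup>2 * (4 * L * (g x - g z - gg z \<bullet> (x - z)) + 2 * (norm (gg z - v))\<^sup>2)"
proof -
  have "(norm (gg x - v))\<^sup>2 \<le> 2 * (norm (gg x - gg z))\<^sup>2 + 2 * (norm (gg z - v))\<^sup>2"
    using norm_add_sq_le[of "gg x - gg z" "gg z - v"] by simp
  also have "\<dots> \<le> 4 * L * (g x - g z - gg z \<bullet> (x - z)) + 2 * (norm (gg z - v))\<^sup>2"
    using gradient_cocoercive[OF deriv lip convex L, of x z] by simp
  finally have "\<eta>\<^sup>2 * (norm (gg x - v))\<^sup>2
      \<le> \<eta>\<^sup>2 * (4 * L * (g x - g z - gg z \<bullet> (x - z)) + 2 * (norm (gg z - v))\<^sup>2)"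
    by (rule mult_left_mono) simp
  moreover have "x - \<eta> *\<^sub>R (gg x - v) - z = (x - z) - \<eta> *\<^sub>R (gg x - v)" by simp
  ultimately show ?thesis by (simp only: norm_diff_scaleR_sq)
qed

locale sgd_cv_objective = P: prob_space P
  for P :: "'e measure"
    and f :: "'e \<Rightarrow> 'a::euclidean_space \<Rightarrow> real"
    and gf c :: "'e \<Rightarrow> 'a \<Rightarrow> 'a"
    and \<theta>star :: 'a
    and L H M :: real +
  assumes grad: "\<And>e x. e \<in> space P \<Longrightarrow> ((f e) has_derivative (\<lambda>h. gf e x \<bullet> h)) (at x)"
    and f_int: "\<And>x. integrable P (\<lambda>e. f e x)"
    and gf_int: "\<And>x. integrable P (\<lambda>e. gf e x)"
    and c_int: "\<And>x. integrable P (\<lambda>e. c e x)"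
    and A3_int: "\<And>x. integrable P (\<lambda>e. (norm (gf e \<theta>star - c e x))\<^sup>2)"
    and interchange: "\<And>x. ((\<lambda>y. \<integral>e. f e y \<partial>P) has_derivative (\<lambda>h. (\<integral>e. gf e x \<partial>P) \<bullet> h)) (at x)"
    and minimizer: "\<And>x. (\<integral>e. f e \<theta>star \<partial>P) \<le> (\<integral>e. f e x \<partial>P)"
    and c_zero_mean: "\<And>x. (\<integral>e. c e x \<partial>P) = 0"
    and L_pos: "L > 0" and H_pos: "H > 0" and M_pos: "M > 0"
    and A1: "\<And>e x y. e \<in> space P \<Longrightarrow> norm (gf e x - gf e y) \<le> L * norm (x - y)"
    and A2: "\<And>e. e \<in> space P \<Longrightarrow> strongly_convex_on UNIV H (f e)"
    and A3: "\<And>x. (\<integral>e. (norm (gf e \<theta>star - c e x))\<^sup>2 \<partial>P)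
                   \<le> M * (\<integral>e. (f e x - f e \<theta>star) \<partial>P)"
begin

lemma expected_gradient_at_minimizer: "(\<integral>e. gf e \<theta>star \<partial>P) = 0"
proof -
  have "(\<lambda>h. (\<integral>e. gf e \<theta>star \<partial>P) \<bullet> h) = (\<lambda>v. 0)"
    by (rule differential_zero_maxmin[of \<theta>star UNIV, OF _ _ interchange]) (use minimizer in auto)
  then have "(\<integral>e. gf e \<theta>star \<partial>P) \<bullet> (\<integral>e. gf e \<theta>star \<partial>P) = 0" by metis
  then show ?thesis by simp
qed

lemma sample_gradient_inequality:
  assumes "e \<in> space P"
  shows "f e x + gf e x \<bullet> (z - x) \<le> f e z"
proof -
  have "0 \<le> H / 2 * (norm (z - x))\<^sup>2" using H_pos by simp
  with strongly_convex_on_gradient_inequality[OF grad[OF assms] A2[OF assms], of x z]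
  show ?thesis by linarith
qed

lemma expected_step_contraction:
  assumes \<eta>_pos: "0 < \<eta>" and \<eta>_le: "\<eta> \<le> 1 / (2 * L + M)"
  shows "integrable P (\<lambda>e. (norm (x - \<eta> *\<^sub>R (gf e x - c e x) - \<theta>star))\<^sup>2)"
    and "(\<integral>e. (norm (x - \<eta> *\<^sub>R (gf e x - c e x) - \<theta>star))\<^sup>2 \<partial>P)
           \<le> (1 - \<eta> * H) * (norm (x - \<theta>star))\<^sup>2"
proof -
  define r where "r = x - \<theta>star"
  define \<psi> where "\<psi> e = (norm (x - \<eta> *\<^sub>R (gf e x - c e x) - \<theta>star))\<^sup>2" for e
  define B where "B e = (norm r)\<^sup>2 - 2 * \<eta> * (gf e x \<bullet> r - c e x \<bullet> r)
      + \<eta>\<^sup>2 * (4 * L * (f e x - f e \<theta>star - gf e \<theta>star \<bullet> r) + 2 * (norm (gf e \<theta>star - c e x))\<^sup>2)" for e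
  have \<psi>_le_B: "\<psi> e \<le> B e" if "e \<in> space P" for e
    using norm_sq_corrected_gradient_step_le[OF grad[OF that] A1[OF that]
        sample_gradient_inequality[OF that] L_pos, of x \<eta> "c e x" \<theta>star]
    unfolding \<psi>_def B_def r_def by (simp add: inner_diff_left)
  have B_int: "integrable P B"
    unfolding B_def using f_int gf_int c_int A3_int
    by (intro Bochner_Integration.integrable_add Bochner_Integration.integrable_diff
        integrable_mult_right integrable_inner_left integrable_const) auto
  show \<psi>_int: "integrable P \<psi>"
  proof (rule Bochner_Integration.integrable_bound[OF B_int])
    have "(\<lambda>e. gf e x) \<in> borel_measurable P" "(\<lambda>e. c e x) \<in> borel_measurable P"
      using gf_int c_int by auto
    then show "\<psi> \<in> borel_measurable P" unfolding \<psi>_def by measurable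
    show "AE e in P. norm (\<psi> e) \<le> norm (B e)"
      using \<psi>_le_B by (intro AE_I2) (fastforce simp: \<psi>_def)
  qed
  define D where "D = (\<integral>e. (f e x - f e \<theta>star) \<partial>P)"
  define G where "G = (\<integral>e. gf e x \<bullet> r \<partial>P)"
  define A where "A = (\<integral>e. (norm (gf e \<theta>star - c e x))\<^sup>2 \<partial>P)"
  have "(\<integral>e. (gf e x \<bullet> r - c e x \<bullet> r) \<partial>P) = G"
    unfolding G_def using gf_int c_int by (simp add: integral_diff c_zero_mean)
  moreover have "(\<integral>e. (f e x - f e \<theta>star - gf e \<theta>star \<bullet> r) \<partial>P) = D"
    unfolding D_def using gf_int f_int by (simp add: integral_diff expected_gradient_at_minimizer)
  ultimately have B_integral: "(\<integral>e. B e \<partial>P) = (norm r)\<^sup>2 - 2 * \<eta> * G + \<eta>\<^sup>2 * (4 * L * D + 2 * A)"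
    unfolding B_def A_def using f_int gf_int c_int A3_int
    by (simp add: integral_diff integral_add P.prob_space del: integral_inner_left)
  have "0 \<le> D" unfolding D_def using minimizer[of x] f_int by (simp add: integral_diff)
  have "D + H / 2 * (norm r)\<^sup>2 \<le> G"
  proof -
    have "(\<integral>e. (f e x - f e \<theta>star + H / 2 * (norm r)\<^sup>2) \<partial>P) \<le> G"
      unfolding G_def
    proof (rule integral_mono)
      fix e assume e: "e \<in> space P"
      from strongly_convex_on_gradient_inequality[OF grad[OF e] A2[OF e], of x \<theta>star]
      show "f e x - f e \<theta>star + H / 2 * (norm r)\<^sup>2 \<le> gf e x \<bullet> r"
        by (simp add: r_def norm_minus_commute inner_diff_right)
    qed (use f_int gf_int in auto)
    then show ?thesis unfolding D_def using f_int by (simp add: integral_diff P.prob_space)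
  qed
  have "\<eta> * (2 * L + M) \<le> 1" using \<eta>_le L_pos M_pos \<eta>_pos by (simp add: field_simps)
  have "\<eta>\<^sup>2 * (4 * L * D + 2 * A) \<le> \<eta>\<^sup>2 * (4 * L * D + 2 * (M * D))"
    using A3[of x] by (intro mult_left_mono) (auto simp: A_def D_def)
  also have "\<dots> = 2 * \<eta> * ((\<eta> * (2 * L + M)) * D)" by (simp add: power2_eq_square algebra_simps)
  also have "\<dots> \<le> 2 * \<eta> * D"
    using mult_right_mono[OF \<open>\<eta> * (2 * L + M) \<le> 1\<close> \<open>0 \<le> D\<close>] \<eta>_pos by (simp add: mult.assoc)
  finally have "\<eta>\<^sup>2 * (4 * L * D + 2 * A) \<le> 2 * \<eta> * D" .
  moreover have "2 * \<eta> * (D + H / 2 * (norm r)\<^sup>2) \<le> 2 * \<eta> * G"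
    using \<open>D + H / 2 * (norm r)\<^sup>2 \<le> G\<close> \<eta>_pos by simp
  moreover have "(\<integral>e. \<psi> e \<partial>P) \<le> (\<integral>e. B e \<partial>P)"
    using \<psi>_le_B by (intro integral_mono \<psi>_int B_int)
  ultimately show "(\<integral>e. \<psi> e \<partial>P) \<le> (1 - \<eta> * H) * (norm (x - \<theta>star))\<^sup>2"
    unfolding B_integral r_def by (simp add: algebra_simps)
qed

lemma step_factor_nonneg:
  assumes "0 < \<eta>" and "\<eta> \<le> 1 / (2 * L + M)"
  shows "0 \<le> 1 - \<eta> * H"
proof -
  obtain b :: 'a where b: "b \<in> Basis" using nonempty_Basis by blast
  \<comment> \<open>the contraction bound at distance one from the minimizer bounds a nonnegative integral\<close>
  have "0 \<le> (\<integral>e. (norm ((\<theta>star + b) - \<eta> *\<^sub>R (gf e (\<theta>star + b) - c e (\<theta>star + b)) - \<theta>star))\<^sup>2 \<partial>P)"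
    by simp
  also have "\<dots> \<le> (1 - \<eta> * H) * (norm ((\<theta>star + b) - \<theta>star))\<^sup>2"
    by (rule expected_step_contraction[OF assms])
  finally show ?thesis using b by simp
qed

end

lemma (in prob_space) nn_integral_fresh_sample:
  fixes eps :: "nat \<Rightarrow> 'a \<Rightarrow> 'e" and G :: "(nat \<Rightarrow> 'e) \<Rightarrow> 'b" and \<phi> :: "'b \<Rightarrow> 'e \<Rightarrow> ennreal"
  assumes P: "prob_space P"
    and indep: "indep_vars (\<lambda>_. P) eps UNIV" and law: "\<And>i. distr M P (eps i) = P"
    and G[measurable]: "G \<in> measurable (\<Pi>\<^sub>M i\<in>{..<t}. P) N"
    and \<phi>[measurable]: "(\<lambda>(x, e). \<phi> x e) \<in> borel_measurable (N \<Otimes>\<^sub>M P)"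
  shows "(\<integral>\<^sup>+\<omega>. \<phi> (G (\<lambda>i\<in>{..<t}. eps i \<omega>)) (eps t \<omega>) \<partial>M)
           = (\<integral>\<^sup>+\<omega>. (\<integral>\<^sup>+e. \<phi> (G (\<lambda>i\<in>{..<t}. eps i \<omega>)) e \<partial>P) \<partial>M)"
proof -
  interpret P: prob_space P by (rule P)
  interpret PS: product_sigma_finite "\<lambda>_::nat. P"
    unfolding product_sigma_finite_def using P.sigma_finite_measure_axioms by simp
  let ?Q = "\<Pi>\<^sub>M i\<in>insert t {..<t}. P"
  have eps_meas[measurable]: "eps i \<in> measurable M P" for i
    using indep unfolding indep_vars_def by auto
  have "indep_vars (\<lambda>_. P) eps (insert t {..<t})"
    by (rule indep_vars_subset[OF indep]) simp
  then have distr_past: "distr M ?Q (\<lambda>\<omega>. \<lambda>i\<in>insert t {..<t}. eps i \<omega>) = ?Q"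
    using indep_vars_iff_distr_eq_PiM[where I="insert t {..<t}" and M'="\<lambda>_. P" and X=eps] by (simp add: law)
  have integral_past: "(\<integral>\<^sup>+\<omega>. F (\<lambda>i\<in>insert t {..<t}. eps i \<omega>) \<partial>M)
      = (\<integral>\<^sup>+x. (\<integral>\<^sup>+y. F (x(t := y)) \<partial>P) \<partial>(\<Pi>\<^sub>M i\<in>{..<t}. P))"
    if F: "F \<in> borel_measurable ?Q" for F
  proof -
    have "(\<integral>\<^sup>+\<omega>. F (\<lambda>i\<in>insert t {..<t}. eps i \<omega>) \<partial>M)
        = (\<integral>\<^sup>+z. F z \<partial>distr M ?Q (\<lambda>\<omega>. \<lambda>i\<in>insert t {..<t}. eps i \<omega>))"
      using F by (subst nn_integral_distr) auto
    also have "\<dots> = (\<integral>\<^sup>+x. (\<integral>\<^sup>+y. F (x(t := y)) \<partial>P) \<partial>(\<Pi>\<^sub>M i\<in>{..<t}. P))"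
      unfolding distr_past using F by (subst PS.product_nn_integral_insert) auto
    finally show ?thesis .
  qed
  have "(\<integral>\<^sup>+\<omega>. \<phi> (G (\<lambda>i\<in>{..<t}. eps i \<omega>)) (eps t \<omega>) \<partial>M)
      = (\<integral>\<^sup>+x. (\<integral>\<^sup>+y. \<phi> (G (restrict x {..<t})) y \<partial>P) \<partial>(\<Pi>\<^sub>M i\<in>{..<t}. P))"
    using integral_past[of "\<lambda>z. \<phi> (G (restrict z {..<t})) (z t)"] by simp
  also have "\<dots> = (\<integral>\<^sup>+\<omega>. (\<integral>\<^sup>+e. \<phi> (G (\<lambda>i\<in>{..<t}. eps i \<omega>)) e \<partial>P) \<partial>M)"
    using integral_past[of "\<lambda>z. \<integral>\<^sup>+e. \<phi> (G (restrict z {..<t})) e \<partial>P"]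
    by (simp add: P.emeasure_space_1)
  finally show ?thesis .
qed

lemma sgd_cv_iter_eq_on_past_samples:
  "(\<And>i. i < t \<Longrightarrow> z i = eps i \<omega>) \<Longrightarrow>
   sgd_cv_iter gf c \<eta> \<theta>0 (\<lambda>i (_::unit). z i) t () = sgd_cv_iter gf c \<eta> \<theta>0 eps t \<omega>"
  by (induction t) (simp_all add: Let_def)

lemma measurable_sgd_cv_iter_samples:
  fixes P :: "'e measure" and gf c :: "'e \<Rightarrow> 'a \<Rightarrow> 'a::euclidean_space"
  assumes gf_meas: "(\<lambda>(e, x). gf e x) \<in> borel_measurable (P \<Otimes>\<^sub>M borel)"
    and c_meas: "(\<lambda>(e, x). c e x) \<in> borel_measurable (P \<Otimes>\<^sub>M borel)"
    and "t \<le> n"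
  shows "(\<lambda>z. sgd_cv_iter gf c \<eta> \<theta>0 (\<lambda>i (_::unit). z i) t ()) \<in> borel_measurable (\<Pi>\<^sub>M i\<in>{..<n}. P)"
  using \<open>t \<le> n\<close>
proof (induction t)
  case (Suc t)
  let ?G = "\<lambda>z. sgd_cv_iter gf c \<eta> \<theta>0 (\<lambda>i (_::unit). z i) t ()"
  have G: "?G \<in> borel_measurable (\<Pi>\<^sub>M i\<in>{..<n}. P)" using Suc by simp
  have "(\<lambda>z. (z t, ?G z)) \<in> measurable (\<Pi>\<^sub>M i\<in>{..<n}. P) (P \<Otimes>\<^sub>M borel)"
    using Suc.prems by (intro measurable_Pair G measurable_component_singleton) auto
  from measurable_compose[OF this gf_meas] measurable_compose[OF this c_meas]
  show ?case using G by (simp add: Let_def) measurable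
qed simp

lemma expected_sq_dist_sgd_cv_iter_Suc_le:
  fixes P :: "'e measure" and \<Omega> :: "'w measure"
    and gf c :: "'e \<Rightarrow> 'a \<Rightarrow> 'a::euclidean_space" and eps :: "nat \<Rightarrow> 'w \<Rightarrow> 'e"
  assumes \<Omega>: "prob_space \<Omega>" and P: "prob_space P"
    and gf_meas: "(\<lambda>(e, x). gf e x) \<in> borel_measurable (P \<Otimes>\<^sub>M borel)"
    and c_meas: "(\<lambda>(e, x). c e x) \<in> borel_measurable (P \<Otimes>\<^sub>M borel)"
    and eps_indep: "prob_space.indep_vars \<Omega> (\<lambda>_. P) eps UNIV"
    and eps_law: "\<And>i. distr \<Omega> P (eps i) = P"
    and iter_int: "\<And>s. integrable \<Omega> (\<lambda>\<omega>. (norm (sgd_cv_iter gf c \<eta> \<theta>0 eps s \<omega> - \<theta>star))\<^sup>2)"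
    and step_int: "\<And>x. integrable P (\<lambda>e. (norm (x - \<eta> *\<^sub>R (gf e x - c e x) - \<theta>star))\<^sup>2)"
    and step_le: "\<And>x. (\<integral>e. (norm (x - \<eta> *\<^sub>R (gf e x - c e x) - \<theta>star))\<^sup>2 \<partial>P)
                        \<le> \<kappa> * (norm (x - \<theta>star))\<^sup>2"
    and \<kappa>: "0 \<le> \<kappa>"
  shows "(\<integral>\<omega>. (norm (sgd_cv_iter gf c \<eta> \<theta>0 eps (Suc t) \<omega> - \<theta>star))\<^sup>2 \<partial>\<Omega>)
           \<le> \<kappa> * (\<integral>\<omega>. (norm (sgd_cv_iter gf c \<eta> \<theta>0 eps t \<omega> - \<theta>star))\<^sup>2 \<partial>\<Omega>)"
proof -
  interpret \<Omega>: prob_space \<Omega> by (rule \<Omega>)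
  define X where "X s \<omega> = sgd_cv_iter gf c \<eta> \<theta>0 eps s \<omega>" for s \<omega>
  define G where "G z = sgd_cv_iter gf c \<eta> \<theta>0 (\<lambda>i (_::unit). z i) t ()" for z
  define \<psi> where "\<psi> x e = (norm (x - \<eta> *\<^sub>R (gf e x - c e x) - \<theta>star))\<^sup>2" for x e
  have X_past: "X t \<omega> = G (\<lambda>i\<in>{..<t}. eps i \<omega>)" for \<omega>
    unfolding X_def G_def by (rule sgd_cv_iter_eq_on_past_samples[symmetric]) simp
  have X_Suc: "(norm (X (Suc t) \<omega> - \<theta>star))\<^sup>2 = \<psi> (G (\<lambda>i\<in>{..<t}. eps i \<omega>)) (eps t \<omega>)" for \<omega>
    by (simp add: X_past[symmetric] \<psi>_def) (simp add: X_def Let_def)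
  have swap: "(\<lambda>(x, e). (e, x)) \<in> measurable (borel \<Otimes>\<^sub>M P) (P \<Otimes>\<^sub>M borel)" by measurable
  have "(\<lambda>(x, e). \<psi> x e) \<in> borel_measurable (borel \<Otimes>\<^sub>M P)"
    using measurable_compose[OF swap gf_meas] measurable_compose[OF swap c_meas]
    unfolding \<psi>_def by (simp add: case_prod_beta') measurable
  then have \<psi>_meas: "(\<lambda>(x, e). ennreal (\<psi> x e)) \<in> borel_measurable (borel \<Otimes>\<^sub>M P)"
    by (simp add: case_prod_beta')
  have G_meas: "G \<in> borel_measurable (\<Pi>\<^sub>M i\<in>{..<t}. P)"
    unfolding G_def by (rule measurable_sgd_cv_iter_samples[OF gf_meas c_meas]) simp
  have "ennreal (\<integral>\<omega>. (norm (X (Suc t) \<omega> - \<theta>star))\<^sup>2 \<partial>\<Omega>)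
      = (\<integral>\<^sup>+\<omega>. \<psi> (G (\<lambda>i\<in>{..<t}. eps i \<omega>)) (eps t \<omega>) \<partial>\<Omega>)"
    using iter_int[of "Suc t"] by (simp add: nn_integral_eq_integral X_def flip: X_Suc)
  also have "\<dots> = (\<integral>\<^sup>+\<omega>. (\<integral>\<^sup>+e. \<psi> (G (\<lambda>i\<in>{..<t}. eps i \<omega>)) e \<partial>P) \<partial>\<Omega>)"
    by (rule \<Omega>.nn_integral_fresh_sample[OF P eps_indep eps_law G_meas \<psi>_meas])
  also have "\<dots> \<le> (\<integral>\<^sup>+\<omega>. \<kappa> * (norm (X t \<omega> - \<theta>star))\<^sup>2 \<partial>\<Omega>)"
  proof (rule nn_integral_mono)
    fix \<omega>
    show "(\<integral>\<^sup>+e. \<psi> (G (\<lambda>i\<in>{..<t}. eps i \<omega>)) e \<partial>P) \<le> \<kappa> * (norm (X t \<omega> - \<theta>star))\<^sup>2"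
      using step_int step_le unfolding X_past \<psi>_def
      by (simp add: nn_integral_eq_integral ennreal_leI)
  qed
  also have "\<dots> = ennreal (\<kappa> * (\<integral>\<omega>. (norm (X t \<omega> - \<theta>star))\<^sup>2 \<partial>\<Omega>))"
    using iter_int[of t] \<kappa> by (simp add: nn_integral_eq_integral X_def)
  finally show ?thesis
    using \<kappa> by (simp add: X_def ennreal_le_iff)
qed

theorem mainTheorem2:
  fixes P :: "'e measure" and \<Omega> :: "'w measure"
    and f :: "'e \<Rightarrow> 'a::euclidean_space \<Rightarrow> real"
    and gf :: "'e \<Rightarrow> 'a \<Rightarrow> 'a"
    and c :: "'e \<Rightarrow> 'a \<Rightarrow> 'a"
    and \<theta>star \<theta>0 :: 'a
    and eps :: "nat \<Rightarrow> 'w \<Rightarrow> 'e"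
    and L H M \<eta> \<rho> :: real and t :: nat
  assumes P: "prob_space P" and \<Omega>: "prob_space \<Omega>"
    and f_meas: "(\<lambda>(e, x). f e x) \<in> borel_measurable (P \<Otimes>\<^sub>M borel)"
    and gf_meas: "(\<lambda>(e, x). gf e x) \<in> borel_measurable (P \<Otimes>\<^sub>M borel)"
    and c_meas: "(\<lambda>(e, x). c e x) \<in> borel_measurable (P \<Otimes>\<^sub>M borel)"
    and grad: "\<And>e x. e \<in> space P \<Longrightarrow> ((f e) has_derivative (\<lambda>h. gf e x \<bullet> h)) (at x)"
    and f_int: "\<And>x. integrable P (\<lambda>e. f e x)"
    and gf_int: "\<And>x. integrable P (\<lambda>e. gf e x)"
    and c_int: "\<And>x. integrable P (\<lambda>e. c e x)"
    and A3_int: "\<And>x. integrable P (\<lambda>e. (norm (gf e \<theta>star - c e x))\<^sup>2)"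
    and interchange: "\<And>x. ((\<lambda>y. \<integral>e. f e y \<partial>P) has_derivative (\<lambda>h. (\<integral>e. gf e x \<partial>P) \<bullet> h)) (at x)"
    and minimizer: "\<And>x. (\<integral>e. f e \<theta>star \<partial>P) \<le> (\<integral>e. f e x \<partial>P)"
    and c_zero_mean: "\<And>x. (\<integral>e. c e x \<partial>P) = 0"
    and L_pos: "L > 0" and H_pos: "H > 0" and M_pos: "M > 0"
    and A1: "\<And>e x y. e \<in> space P \<Longrightarrow> norm (gf e x - gf e y) \<le> L * norm (x - y)"
    and A2: "\<And>e. e \<in> space P \<Longrightarrow> strongly_convex_on UNIV H (f e)"
    and A3: "\<And>x. (\<integral>e. (norm (gf e \<theta>star - c e x))\<^sup>2 \<partial>P)
                   \<le> M * (\<integral>e. (f e x - f e \<theta>star) \<partial>P)"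
    and eps_indep: "prob_space.indep_vars \<Omega> (\<lambda>_. P) eps UNIV"
    and eps_law: "\<And>i. distr \<Omega> P (eps i) = P"
    and iter_int: "\<And>s. integrable \<Omega> (\<lambda>\<omega>. (norm (sgd_cv_iter gf c \<eta> \<theta>0 eps s \<omega> - \<theta>star))\<^sup>2)"
    and \<eta>_pos: "0 < \<eta>" and \<eta>_le: "\<eta> \<le> 1 / (2 * L + M)"
    and \<rho>_def: "\<rho> = 1 - \<eta> * H * (1 - \<eta> * (2 * L + M))"
  shows "(\<integral>\<omega>. (norm (sgd_cv_iter gf c \<eta> \<theta>0 eps t \<omega> - \<theta>star))\<^sup>2 \<partial>\<Omega>)
           \<le> \<rho> ^ t * (norm (\<theta>0 - \<theta>star))\<^sup>2"
proof -
  interpret sgd_cv_objective P f gf c \<theta>star L H M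
    using P grad f_int gf_int c_int A3_int interchange minimizer c_zero_mean L_pos H_pos M_pos A1 A2 A3
    by (simp add: sgd_cv_objective_def sgd_cv_objective_axioms_def)
  define \<kappa> where "\<kappa> = 1 - \<eta> * H"
  have \<kappa>_nonneg: "0 \<le> \<kappa>"
    unfolding \<kappa>_def by (rule step_factor_nonneg[OF \<eta>_pos \<eta>_le])
  have "(\<integral>\<omega>. (norm (sgd_cv_iter gf c \<eta> \<theta>0 eps t \<omega> - \<theta>star))\<^sup>2 \<partial>\<Omega>)
      \<le> \<kappa> ^ t * (norm (\<theta>0 - \<theta>star))\<^sup>2"
  proof (induction t)
    case (Suc t)
    note step = expected_step_contraction[OF \<eta>_pos \<eta>_le, folded \<kappa>_def]
    have "(\<integral>\<omega>. (norm (sgd_cv_iter gf c \<eta> \<theta>0 eps (Suc t) \<omega> - \<theta>star))\<^sup>2 \<partial>\<Omega>)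
        \<le> \<kappa> * (\<integral>\<omega>. (norm (sgd_cv_iter gf c \<eta> \<theta>0 eps t \<omega> - \<theta>star))\<^sup>2 \<partial>\<Omega>)"
      by (rule expected_sq_dist_sgd_cv_iter_Suc_le[OF \<Omega> P gf_meas c_meas eps_indep eps_law
            iter_int step \<kappa>_nonneg])
    also have "\<dots> \<le> \<kappa> * (\<kappa> ^ t * (norm (\<theta>0 - \<theta>star))\<^sup>2)"
      using Suc \<kappa>_nonneg by (rule mult_left_mono)
    finally show ?case by simp
  qed (simp add: prob_space.prob_space[OF \<Omega>])
  also have "\<kappa> ^ t \<le> \<rho> ^ t"
    using \<kappa>_nonneg \<eta>_pos H_pos L_pos M_pos unfolding \<kappa>_def \<rho>_def
    by (intro power_mono) (simp_all add: algebra_simps)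
  finally show ?thesis by (simp add: mult_right_mono)
qed

end
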